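(* Assume $c_1c_2<1$ (in addition to $a_ia_j<1$, $a_ic_1<1$, $a_ic_2<1$). Let $\mathcal P$ be the horizontal path with vertices $(k+j,k)$, $0\le j\le N$, and labels $\boldsymbol b=(b_1,\dots,b_N)$, $b_j=a_{k+j}$. Then the probability mass function $\mathrm P^{\mathcal P}$ on $\mathbb Z^N$ coincides with $\mathrm P^{\boldsymbol b,c_1,c_2}_{\mathrm{stat\,Geo}}$.
   Context: Parameters: $N\ge1$, $a_1,\dots,a_N\in(0,1)$, $c_1,c_2>0$, indices of $a$ taken mod $N$. For the horizontal path, for $\boldsymbol\lambda=(\lambda_i^{(j)})_{i\in\{1,2\},0\le j\le N}\in\mathbb Z^{2N+2}$ define $$\mathrm{wt}^{\mathcal{GP}}(\boldsymbol\lambda)=c_1^{\lambda_1^{(0)}-\lambda_2^{(0)}}c_2^{\lambda_1^{(N)}-\lambda_2^{(N)}}\prod_{j=1}^N\Big[\prod_{i=1}^2b_j^{\lambda_i^{(j)}-\lambda_i^{(j-1)}}\mathbf 1\{\lambda_i^{(j)}\ge\lambda_i^{(j-1)}\}\Big]\mathbf 1\{\lambda_1^{(j-1)}\ge\lambda_2^{(j)}\},$$ $\mathrm{wt}^{\mathcal P}(\boldsymbol\lambda_1)=\sum_{\boldsymbol\lambda_2\in\mathbb Z^{N+1}}\mathrm{wt}^{\mathcal{GP}}(\boldsymbol\lambda_1,\boldsymbol\lambda_2)$, $Z=\sum_{\lambda_1^{(1)},\dots,\lambda_1^{(N)}\in\mathbb Z}\mathrm{wt}^{\mathcal P}(\boldsymbol\lambda_1)$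 for fixed $\lambda_1^{(0)}$ (finite, independent of $\lambda_1^{(0)}$ when $c_1c_2<1$), and $\mathrm P^{\mathcal P}(\mathbf L_1)=\mathrm{wt}^{\mathcal P}(\boldsymbol\lambda_1)/Z$ where $L_1(j)=\lambda_1^{(j)}-\lambda_1^{(0)}$. $\mathbb P^{\boldsymbol b,\boldsymbol b}_{\mathrm{GRW}}$: law of two independent walks $\mathbf L_1,\mathbf L_2$ with $L_i(0)=0$ and independent increments $L_i(j)-L_i(j-1)\sim\mathrm{Geom}(b_j)$ ($\mathbb P(\mathrm{Geom}(q)=n)=(1-q)q^n$). $V(\mathbf L)=(c_1c_2)^{\max_{1\le j\le N}(L_2(j)-L_1(j-1))}c_2^{L_1(N)-L_2(N)}$, $\mathbb P^{\boldsymbol b,c_1,c_2}_{\mathrm{stat\,Geo}}=V\,\mathbb P^{\boldsymbol b,\boldsymbol b}_{\mathrm{GRW}}/\mathbb E^{\boldsymbol b,\boldsymbol b}_{\mathrm{GRW}}[V]$, and $\mathrm P^{\boldsymbol b,c_1,c_2}_{\mathrm{stat\,Geo}}$ is the marginal law of $\mathbf L_1$. *)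

theory Defs
  imports "HOL-Analysis.Analysis"
begin

text \<open>Vectors indexed by 0..N are encoded as functions nat => int vanishing beyond N.\<close>
definition vecs :: "nat \<Rightarrow> (nat \<Rightarrow> int) set" where
  "vecs N = {f. \<forall>j>N. f j = 0}"

definition paths :: "nat \<Rightarrow> (nat \<Rightarrow> int) set" where
  "paths N = {f. f 0 = 0 \<and> (\<forall>j>N. f j = 0)}"

definition ind :: "bool \<Rightarrow> real" where
  "ind P = (if P then 1 else 0)"

text \<open>Labels of the horizontal path with vertices (k+j,k): b_j = a_{k+j}, indices of a mod N
  (a given on 1..N).\<close>
definition horizLabels :: "nat \<Rightarrow> (nat \<Rightarrow> real) \<Rightarrow> int \<Rightarrow> nat \<Rightarrow> real" where
  "horizLabels N a k j = a (nat ((k + int j - 1) mod int N) + 1)"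

definition wtGP :: "nat \<Rightarrow> (nat \<Rightarrow> real) \<Rightarrow> real \<Rightarrow> real \<Rightarrow> (nat \<Rightarrow> int) \<Rightarrow> (nat \<Rightarrow> int) \<Rightarrow> real" where
  "wtGP N b c1 c2 l1 l2 =
     c1 powi (l1 0 - l2 0) * c2 powi (l1 N - l2 N) *
     (\<Prod>j\<in>{1..N}.
        (b j powi (l1 j - l1 (j-1)) * ind (l1 j \<ge> l1 (j-1))) *
        (b j powi (l2 j - l2 (j-1)) * ind (l2 j \<ge> l2 (j-1))) *
        ind (l1 (j-1) \<ge> l2 j))"

definition wtP :: "nat \<Rightarrow> (nat \<Rightarrow> real) \<Rightarrow> real \<Rightarrow> real \<Rightarrow> (nat \<Rightarrow> int) \<Rightarrow> real" where
  "wtP N b c1 c2 l1 = (\<Sum>\<^sub>\<infinity>l2\<in>vecs N. wtGP N b c1 c2 l1 l2)"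

definition Zpart :: "nat \<Rightarrow> (nat \<Rightarrow> real) \<Rightarrow> real \<Rightarrow> real \<Rightarrow> int \<Rightarrow> real" where
  "Zpart N b c1 c2 x0 = (\<Sum>\<^sub>\<infinity>l1\<in>{l \<in> vecs N. l 0 = x0}. wtP N b c1 c2 l1)"

text \<open>P^P(L_1) with lambda_1^(0) = x0 and lambda_1^(j) = x0 + L_1(j).\<close>
definition PP :: "nat \<Rightarrow> (nat \<Rightarrow> real) \<Rightarrow> real \<Rightarrow> real \<Rightarrow> int \<Rightarrow> (nat \<Rightarrow> int) \<Rightarrow> real" where
  "PP N b c1 c2 x0 L =
     wtP N b c1 c2 (\<lambda>j. if j \<le> N then x0 + L j else 0) / Zpart N b c1 c2 x0"

definition grw :: "nat \<Rightarrow> (nat \<Rightarrow> real) \<Rightarrow> (nat \<Rightarrow> int) \<Rightarrow> real" where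
  "grw N b L = (\<Prod>j\<in>{1..N}.
     if L j \<ge> L (j-1) then (1 - b j) * b j ^ nat (L j - L (j-1)) else 0)"

definition Vfun :: "nat \<Rightarrow> real \<Rightarrow> real \<Rightarrow> (nat \<Rightarrow> int) \<Rightarrow> (nat \<Rightarrow> int) \<Rightarrow> real" where
  "Vfun N c1 c2 L1 L2 =
     (c1 * c2) powi (MAX j\<in>{1..N}. L2 j - L1 (j-1)) * c2 powi (L1 N - L2 N)"

definition EV :: "nat \<Rightarrow> (nat \<Rightarrow> real) \<Rightarrow> real \<Rightarrow> real \<Rightarrow> real" where
  "EV N b c1 c2 = (\<Sum>\<^sub>\<infinity>(L1, L2)\<in>paths N \<times> paths N.
      Vfun N c1 c2 L1 L2 * grw N b L1 * grw N b L2)"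

definition PstatGeo :: "nat \<Rightarrow> (nat \<Rightarrow> real) \<Rightarrow> real \<Rightarrow> real \<Rightarrow> (nat \<Rightarrow> int) \<Rightarrow> real" where
  "PstatGeo N b c1 c2 L1 =
     (\<Sum>\<^sub>\<infinity>L2\<in>paths N. Vfun N c1 c2 L1 L2 * grw N b L1 * grw N b L2) / EV N b c1 c2"

end

theory Submission
  imports Defs
begin

text \<open>Write the two lines as \<open>x + L1\<close> and \<open>x - t + L2\<close> with paths \<open>L1, L2\<close> starting at 0.
  The interlacing constraints hold iff \<open>t \<ge> max\<^sub>j (L2 j - L1 (j - 1))\<close>, and then the
  Gibbs weight factorises as \<open>(c1 c2)\<^bsup>t - max\<^esup> V(L1, L2)\<close> times the geometric
  random walk weights of \<open>L1\<close> and \<open>L2\<close>. Summing out the free height \<open>t\<close> contributes the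
  constant \<open>1 / (1 - c1 c2)\<close>, so \<open>wt\<^sup>P(L1)\<close> and \<open>Z\<close> are the same constant multiple of
  \<open>E[V; L1]\<close> and \<open>E[V]\<close>. The only analytic input is that each \<open>E[V; L1]\<close> is finite, which
  lets \<^const>\<open>enn2real\<close> commute with the sum over \<open>L1\<close>.\<close>

lemma ennreal_summable_on [simp]: "(f :: 'a \<Rightarrow> ennreal) summable_on A"
  by (rule nonneg_summable_on_complete) simp

lemma sum_le_infsum_ennreal:
  fixes f :: "'a \<Rightarrow> ennreal"
  assumes "finite F" "F \<subseteq> A"
  shows "sum f F \<le> infsum f A"
  using infsum_mono_neutral[of f F f A] assms by auto

lemma infsum_mono_ennreal:
  fixes f g :: "'a \<Rightarrow> ennreal"
  assumes "\<And>x. x \<in> A \<Longrightarrow> f x \<le> g x"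
  shows "infsum f A \<le> infsum g A"
  by (rule infsum_mono) (use assms in auto)

lemma infsum_cmult_right_ennreal:
  fixes f :: "'a \<Rightarrow> ennreal"
  shows "(\<Sum>\<^sub>\<infinity>x\<in>A. c * f x) = c * infsum f A"
  by (simp add: nonneg_infsum_complete sum_distrib_left SUP_mult_left_ennreal)

lemma infsum_Sigma_finite_ennreal:
  fixes f :: "'a \<Rightarrow> 'b \<Rightarrow> ennreal"
  assumes "finite A"
  shows "(\<Sum>\<^sub>\<infinity>(x,y)\<in>Sigma A B. f x y) = (\<Sum>x\<in>A. infsum (f x) (B x))"
  using assms
proof (induction A rule: finite_induct)
  case empty
  then show ?case by simp
next
  case (insert a A)
  have "Sigma (insert a A) B = Pair a ` B a \<union> Sigma A B"
    by auto
  moreover have "Pair a ` B a \<inter> Sigma A B = {}"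
    using insert.hyps by auto
  moreover have "(\<Sum>\<^sub>\<infinity>(x,y)\<in>Pair a ` B a. f x y) = infsum (f a) (B a)"
    by (subst infsum_reindex) (auto simp: inj_on_def o_def)
  ultimately show ?case
    using insert by (simp add: infsum_Un_disjoint[OF ennreal_summable_on ennreal_summable_on])
qed

lemma infsum_Sigma_ennreal:
  fixes f :: "'a \<Rightarrow> 'b \<Rightarrow> ennreal"
  shows "(\<Sum>\<^sub>\<infinity>(x,y)\<in>Sigma A B. f x y) = (\<Sum>\<^sub>\<infinity>x\<in>A. infsum (f x) (B x))"
proof (rule antisym)
  show "(\<Sum>\<^sub>\<infinity>(x,y)\<in>Sigma A B. f x y) \<le> (\<Sum>\<^sub>\<infinity>x\<in>A. infsum (f x) (B x))"
  proof (subst nonneg_infsum_complete, simp, rule SUP_least, clarify)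
    fix F assume F: "finite F" "F \<subseteq> Sigma A B"
    have "sum (\<lambda>(x,y). f x y) F \<le> (\<Sum>\<^sub>\<infinity>(x,y)\<in>Sigma (fst ` F) B. f x y)"
      by (rule sum_le_infsum_ennreal) (use F in force)+
    also have "\<dots> = (\<Sum>x\<in>fst ` F. infsum (f x) (B x))"
      using F by (intro infsum_Sigma_finite_ennreal) auto
    also have "\<dots> \<le> (\<Sum>\<^sub>\<infinity>x\<in>A. infsum (f x) (B x))"
      by (rule sum_le_infsum_ennreal) (use F in auto)
    finally show "sum (\<lambda>(x,y). f x y) F \<le> (\<Sum>\<^sub>\<infinity>x\<in>A. infsum (f x) (B x))" .
  qed
next
  show "(\<Sum>\<^sub>\<infinity>x\<in>A. infsum (f x) (B x)) \<le> (\<Sum>\<^sub>\<infinity>(x,y)\<in>Sigma A B. f x y)"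
  proof (subst nonneg_infsum_complete, simp, rule SUP_least, clarify)
    fix F assume F: "finite F" "F \<subseteq> A"
    have "(\<Sum>x\<in>F. infsum (f x) (B x)) = (\<Sum>\<^sub>\<infinity>(x,y)\<in>Sigma F B. f x y)"
      using F by (intro infsum_Sigma_finite_ennreal[symmetric])
    also have "\<dots> \<le> (\<Sum>\<^sub>\<infinity>(x,y)\<in>Sigma A B. f x y)"
      by (rule infsum_mono_neutral) (use F in auto)
    finally show "(\<Sum>x\<in>F. infsum (f x) (B x)) \<le> (\<Sum>\<^sub>\<infinity>(x,y)\<in>Sigma A B. f x y)" .
  qed
qed

lemma infsum_ennreal_eq_ennreal_infsum:
  fixes f :: "'a \<Rightarrow> real"
  assumes "f summable_on A" and "\<And>x. x \<in> A \<Longrightarrow> 0 \<le> f x"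
  shows "(\<Sum>\<^sub>\<infinity>x\<in>A. ennreal (f x)) = ennreal (infsum f A)"
proof -
  have "ennreal (infsum f A) = (SUP F\<in>{F. finite F \<and> F \<subseteq> A}. ennreal (sum f F))"
    by (rule infsum_nonneg_is_SUPREMUM_ennreal[OF assms])
  also have "\<dots> = (\<Sum>\<^sub>\<infinity>x\<in>A. ennreal (f x))"
    by (subst nonneg_infsum_complete) (auto intro!: SUP_cong simp: sum_ennreal assms(2) subset_iff)
  finally show ?thesis by simp
qed

lemma infsum_eq_enn2real_infsum_ennreal:
  fixes f :: "'a \<Rightarrow> real"
  assumes nonneg: "\<And>x. x \<in> A \<Longrightarrow> 0 \<le> f x"
  shows "infsum f A = enn2real (\<Sum>\<^sub>\<infinity>x\<in>A. ennreal (f x))"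
proof (cases "f summable_on A")
  case True
  then show ?thesis
    using infsum_ennreal_eq_ennreal_infsum infsum_nonneg nonneg by (metis enn2real_ennreal)
next
  case False
  have "(\<Sum>\<^sub>\<infinity>x\<in>A. ennreal (f x)) = \<infinity>"
  proof (rule ccontr)
    assume finite_sum: "(\<Sum>\<^sub>\<infinity>x\<in>A. ennreal (f x)) \<noteq> \<infinity>"
    have "sum f F \<le> enn2real (\<Sum>\<^sub>\<infinity>x\<in>A. ennreal (f x))" if "F \<subseteq> A" "finite F" for F
    proof -
      have "ennreal (sum f F) = (\<Sum>x\<in>F. ennreal (f x))"
        using that nonneg by (subst sum_ennreal) auto
      also have "\<dots> \<le> (\<Sum>\<^sub>\<infinity>x\<in>A. ennreal (f x))"
        by (rule sum_le_infsum_ennreal) (use that in auto)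
      finally have "enn2real (ennreal (sum f F)) \<le> enn2real (\<Sum>\<^sub>\<infinity>x\<in>A. ennreal (f x))"
        using finite_sum by (intro enn2real_mono) (simp_all add: less_top)
      then show ?thesis
        using that nonneg by (simp add: subset_iff sum_nonneg)
    qed
    then have "f summable_on A"
      using nonneg by (intro nonneg_bdd_above_summable_on bdd_aboveI) auto
    with False show False by simp
  qed
  with False show ?thesis by (simp add: infsum_not_exists)
qed

lemma infsum_geometric_from_ennreal:
  fixes r :: real and M :: int
  assumes "0 \<le> r" "r < 1"
  shows "(\<Sum>\<^sub>\<infinity>t. ennreal (if M \<le> t then r powi (t - M) else 0)) = ennreal (1 / (1 - r))"
proof -
  have "(\<Sum>\<^sub>\<infinity>t. ennreal (if M \<le> t then r powi (t - M) else 0)) = (\<Sum>\<^sub>\<infinity>t\<in>{M..}. ennreal (r powi (t - M)))"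
    by (rule infsum_cong_neutral) auto
  also have "\<dots> = (\<Sum>\<^sub>\<infinity>n::nat. ennreal (r ^ n))"
    by (rule infsum_reindex_bij_witness[of _ "\<lambda>n. M + int n" "\<lambda>t. nat (t - M)"]) (auto simp: power_int_nonneg_exp)
  also have "\<dots> = ennreal (\<Sum>\<^sub>\<infinity>n::nat. r ^ n)"
    using assms by (intro infsum_ennreal_eq_ennreal_infsum summable_nonneg_imp_summable_on
        summable_geometric) auto
  also have "(\<Sum>\<^sub>\<infinity>n::nat. r ^ n) = 1 / (1 - r)"
    using assms by (intro infsumI sums_nonneg_imp_has_sum geometric_sums) auto
  finally show ?thesis .
qed

lemma paths_0: "paths 0 = {\<lambda>_. 0}"
  by (auto simp: paths_def fun_eq_iff) (metis gr0I)

lemma bij_betw_paths_Suc: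
  "bij_betw (\<lambda>(L, d). L(Suc N := L N + d)) (paths N \<times> UNIV) (paths (Suc N))"
  by (rule bij_betw_byWitness[where f' = "\<lambda>L. (L(Suc N := 0), L (Suc N) - L N)"])
    (auto simp: paths_def fun_eq_iff)

lemma infsum_paths_prod_increments:
  fixes g :: "nat \<Rightarrow> int \<Rightarrow> ennreal"
  shows "(\<Sum>\<^sub>\<infinity>L\<in>paths N. \<Prod>j\<in>{1..N}. g j (L j - L (j - 1))) = (\<Prod>j\<in>{1..N}. infsum (g j) UNIV)"
proof (induction N)
  case 0
  then show ?case by (simp add: paths_0)
next
  case (Suc N)
  let ?P = "\<lambda>N L. \<Prod>j\<in>{1..N}. g j (L j - L (j - 1))"
  have extend: "?P (Suc N) (L(Suc N := L N + d)) = ?P N L * g (Suc N) d" for L d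
  proof -
    have "?P N (L(Suc N := L N + d)) = ?P N L"
      by (rule prod.cong) auto
    then show ?thesis by simp
  qed
  have "(\<Sum>\<^sub>\<infinity>L\<in>paths (Suc N). ?P (Suc N) L)
      = (\<Sum>\<^sub>\<infinity>(L, d)\<in>paths N \<times> UNIV. ?P (Suc N) (L(Suc N := L N + d)))"
    using infsum_reindex_bij_betw[OF bij_betw_paths_Suc, of "?P (Suc N)"] by (simp only: case_prod_beta')
  also have "\<dots> = (\<Sum>\<^sub>\<infinity>(L, d)\<in>paths N \<times> UNIV. ?P N L * g (Suc N) d)"
    by (simp only: extend)
  also have "\<dots> = (\<Sum>\<^sub>\<infinity>L\<in>paths N. ?P N L * infsum (g (Suc N)) UNIV)"
    by (simp add: infsum_Sigma_ennreal infsum_cmult_right_ennreal)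
  also have "\<dots> = (\<Sum>\<^sub>\<infinity>L\<in>paths N. ?P N L) * infsum (g (Suc N)) UNIV"
    using infsum_cmult_right_ennreal[of "infsum (g (Suc N)) UNIV" "?P N"] by (simp add: mult.commute)
  finally show ?case
    using Suc by simp
qed

definition shift_path :: "nat \<Rightarrow> int \<Rightarrow> (nat \<Rightarrow> int) \<Rightarrow> nat \<Rightarrow> int" where
  "shift_path N x L = (\<lambda>j. if j \<le> N then x + L j else 0)"

lemma bij_betw_shift_path: "bij_betw (shift_path N x) (paths N) {l \<in> vecs N. l 0 = x}"
  by (rule bij_betw_byWitness[where f' = "\<lambda>l j. if j \<le> N then l j - x else 0"])
    (auto simp: paths_def vecs_def shift_path_def fun_eq_iff)

lemma bij_betw_shift_path_height:
  "bij_betw (\<lambda>(L, t). shift_path N (x - t) L) (paths N \<times> UNIV) (vecs N)"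
  by (rule bij_betw_byWitness[where f' = "\<lambda>l. (\<lambda>j. if j \<le> N then l j - l 0 else 0, x - l 0)"])
    (auto simp: paths_def vecs_def shift_path_def fun_eq_iff)

definition incr_weight :: "nat \<Rightarrow> (nat \<Rightarrow> real) \<Rightarrow> (nat \<Rightarrow> int) \<Rightarrow> real" where
  "incr_weight N b L = (\<Prod>j\<in>{1..N}. b j powi (L j - L (j - 1)) * ind (L (j - 1) \<le> L j))"

definition max_gap :: "nat \<Rightarrow> (nat \<Rightarrow> int) \<Rightarrow> (nat \<Rightarrow> int) \<Rightarrow> int" where
  "max_gap N L1 L2 = (MAX j\<in>{1..N}. L2 j - L1 (j - 1))"

lemma prod_ind: "finite A \<Longrightarrow> (\<Prod>j\<in>A. ind (P j)) = ind (\<forall>j\<in>A. P j)"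
  by (induction A rule: finite_induct) (auto simp: ind_def)

lemma ind_nonneg: "0 \<le> ind P"
  by (simp add: ind_def)

lemma prod_powi_increments:
  fixes r :: real and L :: "nat \<Rightarrow> int"
  assumes "r \<noteq> 0"
  shows "(\<Prod>j\<in>{1..N}. r powi (L j - L (j - 1))) = r powi (L N - L 0)"
proof (induction N)
  case 0
  then show ?case by simp
next
  case (Suc N)
  then show ?case
    using assms by (simp add: power_int_add[symmetric])
qed

lemma grw_eq_incr_weight: "grw N b L = (\<Prod>j\<in>{1..N}. 1 - b j) * incr_weight N b L"
  unfolding grw_def incr_weight_def prod.distrib[symmetric]
  by (rule prod.cong) (auto simp: ind_def power_int_nonneg_exp)

lemma grw_nonneg: "(\<And>j. j \<in> {1..N} \<Longrightarrow> 0 \<le> b j \<and> b j \<le> 1) \<Longrightarrow> 0 \<le> grw N b L"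
  unfolding grw_def by (intro prod_nonneg) auto

lemma Vfun_nonneg: "0 < c1 \<Longrightarrow> 0 < c2 \<Longrightarrow> 0 \<le> Vfun N c1 c2 L1 L2"
  unfolding Vfun_def by simp

lemma Vfun_eq_max_gap: "Vfun N c1 c2 L1 L2 = (c1 * c2) powi max_gap N L1 L2 * c2 powi (L1 N - L2 N)"
  unfolding Vfun_def max_gap_def ..

lemma max_gap_le_iff: "N \<ge> 1 \<Longrightarrow> max_gap N L1 L2 \<le> t \<longleftrightarrow> (\<forall>j\<in>{1..N}. L2 j - L1 (j - 1) \<le> t)"
  unfolding max_gap_def by (subst Max_le_iff) auto

lemma max_gap_ge: "j \<in> {1..N} \<Longrightarrow> L2 j - L1 (j - 1) \<le> max_gap N L1 L2"
  unfolding max_gap_def by (intro Max_ge) auto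

lemma wtGP_shift_path:
  assumes "N \<ge> 1" "c1 \<noteq> 0" "c2 \<noteq> 0" "L1 \<in> paths N" "L2 \<in> paths N"
  shows "wtGP N b c1 c2 (shift_path N x L1) (shift_path N (x - t) L2)
    = (if max_gap N L1 L2 \<le> t then (c1 * c2) powi (t - max_gap N L1 L2) else 0)
      * Vfun N c1 c2 L1 L2 * incr_weight N b L1 * incr_weight N b L2"
proof -
  let ?M = "max_gap N L1 L2"
  define l1 where "l1 = shift_path N x L1"
  define l2 where "l2 = shift_path N (x - t) L2"
  have boundary: "l1 0 - l2 0 = t" "l1 N - l2 N = L1 N - L2 N + t"
    using assms(4,5) by (auto simp: l1_def l2_def shift_path_def paths_def)
  have interior: "(\<Prod>j\<in>{1..N}. (b j powi (l1 j - l1 (j - 1)) * ind (l1 j \<ge> l1 (j - 1)))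
      * (b j powi (l2 j - l2 (j - 1)) * ind (l2 j \<ge> l2 (j - 1))) * ind (l1 (j - 1) \<ge> l2 j))
    = incr_weight N b L1 * incr_weight N b L2 * ind (?M \<le> t)" (is "?lhs = _")
  proof -
    have "?lhs = (\<Prod>j\<in>{1..N}. (b j powi (L1 j - L1 (j - 1)) * ind (L1 (j - 1) \<le> L1 j))
        * (b j powi (L2 j - L2 (j - 1)) * ind (L2 (j - 1) \<le> L2 j)) * ind (L2 j - L1 (j - 1) \<le> t))"
      by (rule prod.cong) (auto simp: l1_def l2_def shift_path_def intro!: arg_cong[where f = ind])
    also have "\<dots> = incr_weight N b L1 * incr_weight N b L2 * ind (?M \<le> t)"
      using assms(1) by (simp add: incr_weight_def prod.distrib prod_ind max_gap_le_iff)
    finally show ?thesis .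
  qed
  have "wtGP N b c1 c2 l1 l2
      = c1 powi t * c2 powi (L1 N - L2 N + t) * (incr_weight N b L1 * incr_weight N b L2 * ind (?M \<le> t))"
    unfolding wtGP_def boundary interior ..
  moreover have "c1 powi t * c2 powi (L1 N - L2 N + t) = (c1 * c2) powi (t - ?M) * Vfun N c1 c2 L1 L2"
    using assms(2,3) by (simp add: Vfun_eq_max_gap power_int_add power_int_diff power_int_mult_distrib)
  ultimately show ?thesis
    by (simp add: l1_def l2_def ind_def)
qed

lemma wtGP_nonneg:
  assumes "\<And>j. j \<in> {1..N} \<Longrightarrow> 0 \<le> b j" "0 < c1" "0 < c2"
  shows "0 \<le> wtGP N b c1 c2 l1 l2"
  unfolding wtGP_def using assms by (intro mult_nonneg_nonneg prod_nonneg ind_nonneg) auto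

text \<open>The numerator of \<^const>\<open>PstatGeo\<close>, summed in \<^typ>\<open>ennreal\<close> so that reindexing and
  Fubini need no summability side conditions.\<close>
definition marginal_weight :: "nat \<Rightarrow> (nat \<Rightarrow> real) \<Rightarrow> real \<Rightarrow> real \<Rightarrow> (nat \<Rightarrow> int) \<Rightarrow> ennreal" where
  "marginal_weight N b c1 c2 L1 =
     (\<Sum>\<^sub>\<infinity>L2\<in>paths N. ennreal (Vfun N c1 c2 L1 L2 * grw N b L1 * grw N b L2))"

context
  fixes N :: nat and b :: "nat \<Rightarrow> real" and c1 c2 :: real
  assumes N: "N \<ge> 1" and b: "\<And>j. j \<in> {1..N} \<Longrightarrow> 0 < b j \<and> b j < 1"
    and c1: "0 < c1" and c2: "0 < c2" and c1c2: "c1 * c2 < 1"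
begin

lemma b_unit_interval: "j \<in> {1..N} \<Longrightarrow> 0 \<le> b j \<and> b j \<le> 1"
  using b by (simp add: less_imp_le)

lemma pair_weight_nonneg: "0 \<le> Vfun N c1 c2 L1 L2 * grw N b L1 * grw N b L2"
  using b_unit_interval c1 c2 by (intro mult_nonneg_nonneg Vfun_nonneg grw_nonneg) auto

lemma wtP_shift_path:
  assumes L1: "L1 \<in> paths N"
  shows "wtP N b c1 c2 (shift_path N x L1)
    = enn2real (marginal_weight N b c1 c2 L1) / ((1 - c1 * c2) * (\<Prod>j\<in>{1..N}. 1 - b j)\<^sup>2)"
proof -
  define P where "P = (\<Prod>j\<in>{1..N}. 1 - b j)"
  define D where "D = (1 - c1 * c2) * P\<^sup>2"
  have "0 < P"
    using b by (auto simp: P_def intro!: prod_pos)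
  then have "0 < D"
    using c1c2 by (simp add: D_def)
  let ?g = "\<lambda>L2 t. if max_gap N L1 L2 \<le> t then (c1 * c2) powi (t - max_gap N L1 L2) else 0"
  let ?w = "\<lambda>L2. Vfun N c1 c2 L1 L2 * grw N b L1 * grw N b L2"
  have split: "ennreal (wtGP N b c1 c2 (shift_path N x L1) (shift_path N (x - t) L2))
      = ennreal (?w L2 / P\<^sup>2) * ennreal (?g L2 t)" if "L2 \<in> paths N" for L2 t
  proof -
    have "wtGP N b c1 c2 (shift_path N x L1) (shift_path N (x - t) L2) = ?w L2 / P\<^sup>2 * ?g L2 t"
      unfolding grw_eq_incr_weight P_def[symmetric]
      using wtGP_shift_path[OF N _ _ L1 that, of c1 c2 b x t] c1 c2 \<open>0 < P\<close>
      by (simp add: power2_eq_square)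
    moreover have "0 \<le> ?g L2 t"
      using c1 c2 by simp
    ultimately show ?thesis
      by (simp only: ennreal_mult'')
  qed
  have "(\<Sum>\<^sub>\<infinity>l2\<in>vecs N. ennreal (wtGP N b c1 c2 (shift_path N x L1) l2))
      = (\<Sum>\<^sub>\<infinity>(L2, t)\<in>paths N \<times> UNIV. ennreal (wtGP N b c1 c2 (shift_path N x L1) (shift_path N (x - t) L2)))"
    using infsum_reindex_bij_betw[OF bij_betw_shift_path_height, of "\<lambda>l2. ennreal (wtGP N b c1 c2 (shift_path N x L1) l2)" N x]
    by (simp only: case_prod_beta')
  also have "\<dots> = (\<Sum>\<^sub>\<infinity>(L2, t)\<in>paths N \<times> UNIV. ennreal (?w L2 / P\<^sup>2) * ennreal (?g L2 t))"
    by (intro infsum_cong) (auto simp only: split mem_Sigma_iff)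
  also have "\<dots> = (\<Sum>\<^sub>\<infinity>L2\<in>paths N. ennreal (?w L2 / P\<^sup>2) * ennreal (1 / (1 - c1 * c2)))"
    using c1 c2 c1c2
    by (simp add: infsum_Sigma_ennreal infsum_cmult_right_ennreal infsum_geometric_from_ennreal)
  also have "\<dots> = (\<Sum>\<^sub>\<infinity>L2\<in>paths N. ennreal (1 / D) * ennreal (?w L2))"
    using pair_weight_nonneg \<open>0 < P\<close> c1c2
    by (intro infsum_cong) (simp add: ennreal_mult[symmetric] D_def)
  also have "\<dots> = ennreal (1 / D) * marginal_weight N b c1 c2 L1"
    by (simp add: infsum_cmult_right_ennreal marginal_weight_def)
  finally have ennreal_sum: "(\<Sum>\<^sub>\<infinity>l2\<in>vecs N. ennreal (wtGP N b c1 c2 (shift_path N x L1) l2))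
      = ennreal (1 / D) * marginal_weight N b c1 c2 L1" .
  have "wtP N b c1 c2 (shift_path N x L1)
      = enn2real (\<Sum>\<^sub>\<infinity>l2\<in>vecs N. ennreal (wtGP N b c1 c2 (shift_path N x L1) l2))"
    unfolding wtP_def
    by (rule infsum_eq_enn2real_infsum_ennreal) (use b_unit_interval c1 c2 in \<open>auto intro: wtGP_nonneg\<close>)
  also have "\<dots> = enn2real (marginal_weight N b c1 c2 L1) / D"
    using \<open>0 < D\<close> by (simp add: ennreal_sum enn2real_mult)
  finally show ?thesis
    by (simp add: D_def P_def)
qed

lemma Vfun_le_powi_c1:
  "Vfun N c1 c2 L1 L2 \<le> (c1 * c2) powi (- L1 (N - 1)) * c2 powi L1 N * c1 powi L2 N"
proof -
  have "L2 N - L1 (N - 1) \<le> max_gap N L1 L2"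
    using N by (intro max_gap_ge) auto
  then have "Vfun N c1 c2 L1 L2 \<le> (c1 * c2) powi (L2 N - L1 (N - 1)) * c2 powi (L1 N - L2 N)"
    unfolding Vfun_eq_max_gap using c1 c2 c1c2 by (intro mult_right_mono power_int_decreasing) auto
  also have "\<dots> = (c1 * c2) powi (- L1 (N - 1)) * c2 powi L1 N * c1 powi L2 N"
    using c1 c2 by (simp add: power_int_diff power_int_mult_distrib power_int_minus field_simps)
  finally show ?thesis .
qed

lemma grw_mult_powi_le:
  assumes "L \<in> paths N"
  shows "grw N b L * c1 powi L N
    \<le> (\<Prod>j\<in>{1..N}. if 0 \<le> L j - L (j - 1) then (b j * c1) powi (L j - L (j - 1)) else 0)"
proof -
  have "c1 powi L N = (\<Prod>j\<in>{1..N}. c1 powi (L j - L (j - 1)))"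
    using prod_powi_increments[of c1 L N] assms c1 by (simp add: paths_def)
  then have "grw N b L * c1 powi L N = (\<Prod>j\<in>{1..N}.
      (if L (j - 1) \<le> L j then (1 - b j) * b j ^ nat (L j - L (j - 1)) else 0) * c1 powi (L j - L (j - 1)))"
    by (simp add: grw_def prod.distrib)
  also have "\<dots> \<le> (\<Prod>j\<in>{1..N}. if 0 \<le> L j - L (j - 1) then (b j * c1) powi (L j - L (j - 1)) else 0)"
  proof (rule prod_mono)
    fix j assume "j \<in> {1..N}"
    then have "0 < b j" "b j < 1"
      using b by auto
    then show "0 \<le> (if L (j - 1) \<le> L j then (1 - b j) * b j ^ nat (L j - L (j - 1)) else 0) * c1 powi (L j - L (j - 1))
      \<and> (if L (j - 1) \<le> L j then (1 - b j) * b j ^ nat (L j - L (j - 1)) else 0) * c1 powi (L j - L (j - 1))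
        \<le> (if 0 \<le> L j - L (j - 1) then (b j * c1) powi (L j - L (j - 1)) else 0)"
      using c1 by (auto simp: power_int_nonneg_exp power_mult_distrib mult_le_cancel_right1)
  qed
  finally show ?thesis .
qed

lemma marginal_weight_finite:
  assumes bc1: "\<And>j. j \<in> {1..N} \<Longrightarrow> b j * c1 < 1" and L1: "L1 \<in> paths N"
  shows "marginal_weight N b c1 c2 L1 < \<infinity>"
proof -
  define K where "K = (c1 * c2) powi (- L1 (N - 1)) * c2 powi L1 N * grw N b L1"
  define g where "g = (\<lambda>j (d :: int). ennreal (if 0 \<le> d then (b j * c1) powi d else 0))"
  have "0 \<le> K"
    unfolding K_def using b_unit_interval c1 c2 by (intro mult_nonneg_nonneg grw_nonneg) auto
  have bound: "ennreal (Vfun N c1 c2 L1 L2 * grw N b L1 * grw N b L2)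
      \<le> ennreal K * (\<Prod>j\<in>{1..N}. g j (L2 j - L2 (j - 1)))" if L2: "L2 \<in> paths N" for L2
  proof -
    have "Vfun N c1 c2 L1 L2 * grw N b L1 * grw N b L2
        \<le> (c1 * c2) powi (- L1 (N - 1)) * c2 powi L1 N * c1 powi L2 N * grw N b L1 * grw N b L2"
      using b_unit_interval by (intro mult_right_mono Vfun_le_powi_c1 grw_nonneg) auto
    also have "\<dots> = K * (grw N b L2 * c1 powi L2 N)"
      by (simp add: K_def mult_ac)
    also have "\<dots> \<le> K * (\<Prod>j\<in>{1..N}. if 0 \<le> L2 j - L2 (j - 1) then (b j * c1) powi (L2 j - L2 (j - 1)) else 0)"
      using grw_mult_powi_le[OF L2] \<open>0 \<le> K\<close> by (rule mult_left_mono)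
    finally have real_bound: "Vfun N c1 c2 L1 L2 * grw N b L1 * grw N b L2
        \<le> K * (\<Prod>j\<in>{1..N}. if 0 \<le> L2 j - L2 (j - 1) then (b j * c1) powi (L2 j - L2 (j - 1)) else 0)" .
    have "(\<Prod>j\<in>{1..N}. g j (L2 j - L2 (j - 1)))
        = ennreal (\<Prod>j\<in>{1..N}. if 0 \<le> L2 j - L2 (j - 1) then (b j * c1) powi (L2 j - L2 (j - 1)) else 0)"
      unfolding g_def by (rule prod_ennreal) (use b_unit_interval c1 in auto)
    then show ?thesis
      using real_bound by (simp only: ennreal_mult'[OF \<open>0 \<le> K\<close>, symmetric] ennreal_leI)
  qed
  have geometric: "infsum (g j) UNIV = ennreal (1 / (1 - b j * c1))" if j: "j \<in> {1..N}" for j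
  proof -
    have "0 \<le> b j * c1" "b j * c1 < 1"
      using b[OF j] c1 bc1[OF j] by auto
    then show ?thesis
      using infsum_geometric_from_ennreal[of "b j * c1" 0] by (simp only: g_def diff_0_right)
  qed
  have "marginal_weight N b c1 c2 L1 \<le> (\<Sum>\<^sub>\<infinity>L2\<in>paths N. ennreal K * (\<Prod>j\<in>{1..N}. g j (L2 j - L2 (j - 1))))"
    unfolding marginal_weight_def by (rule infsum_mono_ennreal) (rule bound)
  also have "\<dots> = ennreal K * (\<Prod>j\<in>{1..N}. infsum (g j) UNIV)"
    by (simp only: infsum_cmult_right_ennreal infsum_paths_prod_increments)
  also have "\<dots> = ennreal K * (\<Prod>j\<in>{1..N}. ennreal (1 / (1 - b j * c1)))"
    by (simp add: geometric)
  also have "\<dots> < \<infinity>"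
    by (simp add: ennreal_mult_eq_top_iff ennreal_prod_eq_top less_top[symmetric])
  finally show ?thesis .
qed

lemma PstatGeo_eq_marginal_weight:
  "PstatGeo N b c1 c2 L = enn2real (marginal_weight N b c1 c2 L) / EV N b c1 c2"
  unfolding PstatGeo_def marginal_weight_def
  by (subst infsum_eq_enn2real_infsum_ennreal) (simp_all add: pair_weight_nonneg)

lemma EV_eq_infsum_marginal_weight:
  "EV N b c1 c2 = enn2real (\<Sum>\<^sub>\<infinity>L1\<in>paths N. marginal_weight N b c1 c2 L1)"
proof -
  have "EV N b c1 c2 = enn2real (\<Sum>\<^sub>\<infinity>(L1, L2)\<in>paths N \<times> paths N.
      ennreal (Vfun N c1 c2 L1 L2 * grw N b L1 * grw N b L2))"
    unfolding EV_def by (subst infsum_eq_enn2real_infsum_ennreal) (auto simp: pair_weight_nonneg case_prod_beta')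
  then show ?thesis
    by (simp add: marginal_weight_def infsum_Sigma_ennreal)
qed

lemma Zpart_eq_EV:
  assumes "\<And>j. j \<in> {1..N} \<Longrightarrow> b j * c1 < 1"
  shows "Zpart N b c1 c2 x = EV N b c1 c2 / ((1 - c1 * c2) * (\<Prod>j\<in>{1..N}. 1 - b j)\<^sup>2)"
proof -
  let ?D = "(1 - c1 * c2) * (\<Prod>j\<in>{1..N}. 1 - b j)\<^sup>2"
  have "Zpart N b c1 c2 x = (\<Sum>\<^sub>\<infinity>L1\<in>paths N. wtP N b c1 c2 (shift_path N x L1))"
    unfolding Zpart_def by (rule infsum_reindex_bij_betw[OF bij_betw_shift_path, symmetric])
  also have "\<dots> = (\<Sum>\<^sub>\<infinity>L1\<in>paths N. enn2real (marginal_weight N b c1 c2 L1) / ?D)"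
    by (rule infsum_cong) (rule wtP_shift_path)
  also have "\<dots> = (\<Sum>\<^sub>\<infinity>L1\<in>paths N. enn2real (marginal_weight N b c1 c2 L1)) / ?D"
    by (simp only: divide_inverse infsum_cmult_left')
  also have "(\<Sum>\<^sub>\<infinity>L1\<in>paths N. enn2real (marginal_weight N b c1 c2 L1)) = EV N b c1 c2"
    using marginal_weight_finite[OF assms]
    by (simp add: infsum_eq_enn2real_infsum_ennreal EV_eq_infsum_marginal_weight less_top[symmetric]
        ennreal_enn2real_if cong: infsum_cong)
  finally show ?thesis .
qed

lemma PP_eq_PstatGeo:
  assumes "\<And>j. j \<in> {1..N} \<Longrightarrow> b j * c1 < 1" and "L \<in> paths N"
  shows "PP N b c1 c2 x L = PstatGeo N b c1 c2 L"
proof -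
  define D where "D = (1 - c1 * c2) * (\<Prod>j\<in>{1..N}. 1 - b j)\<^sup>2"
  have "0 < (\<Prod>j\<in>{1..N}. 1 - b j)"
    using b by (auto intro!: prod_pos)
  then have "0 < D"
    unfolding D_def using c1c2 by (intro mult_pos_pos zero_less_power) auto
  have "PP N b c1 c2 x L = wtP N b c1 c2 (shift_path N x L) / Zpart N b c1 c2 x"
    by (simp add: PP_def shift_path_def)
  also have "\<dots> = (enn2real (marginal_weight N b c1 c2 L) / D) / (EV N b c1 c2 / D)"
    unfolding D_def by (simp only: wtP_shift_path[OF assms(2)] Zpart_eq_EV[OF assms(1)])
  also have "\<dots> = PstatGeo N b c1 c2 L"
    using \<open>0 < D\<close> by (simp add: PstatGeo_eq_marginal_weight)
  finally show ?thesis .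
qed

end

lemma horizLabels_in_range:
  assumes "N \<ge> 1"
  shows "horizLabels N a k j \<in> a ` {1..N}"
proof -
  have "nat ((k + int j - 1) mod int N) < N"
    using assms by (simp add: nat_less_iff)
  then show ?thesis
    unfolding horizLabels_def by (intro imageI) simp
qed

theorem proposition2p17:
  fixes N :: nat and a :: "nat \<Rightarrow> real" and c1 c2 :: real
  assumes "N \<ge> 1"
    and "\<forall>i\<in>{1..N}. 0 < a i \<and> a i < 1"
    and "c1 > 0" and "c2 > 0"
    and "\<forall>i\<in>{1..N}. \<forall>j\<in>{1..N}. a i * a j < 1"
    and "\<forall>i\<in>{1..N}. a i * c1 < 1"
    and "\<forall>i\<in>{1..N}. a i * c2 < 1"
    and "c1 * c2 < 1"
  shows "\<forall>k::int. \<forall>x0::int. \<forall>L\<in>paths N.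
           PP N (horizLabels N a k) c1 c2 x0 L = PstatGeo N (horizLabels N a k) c1 c2 L"
proof (intro allI ballI)
  fix k x0 :: int and L assume "L \<in> paths N"
  have "0 < horizLabels N a k j \<and> horizLabels N a k j < 1" "horizLabels N a k j * c1 < 1" for j
    using horizLabels_in_range[OF assms(1), of a k j] assms(2,6) by auto
  then show "PP N (horizLabels N a k) c1 c2 x0 L = PstatGeo N (horizLabels N a k) c1 c2 L"
    using assms(1,3,4,8) \<open>L \<in> paths N\<close> by (intro PP_eq_PstatGeo) auto
qed

end
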